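(* There exists $C(\tau_0)\in(0,\infty)$ such that for all $\tau\in(0,\tau_0)$ and all $x_1,x_2,x\in\mathbb R^2$: (1) $\langle x_2-x_1,\psi_\tau(x_2)-\psi_\tau(x_1)\rangle\le C(\tau_0)\|x_2-x_1\|^2$; (2) $\|\psi_\tau(x_2)-\psi_\tau(x_1)\|\le C(\tau_0)(1+\|x_1\|^3+\|x_2\|^3)\|x_2-x_1\|$; (3) $\|\psi_\tau(x)-F(x)\|\le C(\tau_0)\,\tau\,(1+\|x\|^5)$. Moreover $\sup_{\tau\in(0,\tau_0)}\|\psi_\tau(0)\|<\infty$.
   Context: $\langle\cdot,\cdot\rangle$, $\|\cdot\|$ are the Euclidean inner product and norm on $\mathbb R^2$. Fix real $\gamma_1,\gamma_2,\beta$, $B=\begin{pmatrix}0&-1\\ \gamma_1&-\gamma_2\end{pmatrix}$ and $F(u,v)=(u-u^3-v,\ \gamma_1u-\gamma_2v+\beta)$. For $t\ge0$, $\phi^{\rm NL}_t(u,v)=\big(u/\sqrt{u^2+(1-u^2)e^{-2t}},\ v+\beta t\big)$ and $\phi^{\rm L}_t(x)=e^{tB}x$. Fix $\tau_0>0$; for $\tau\in(0,\tau_0)$ let $\phi_\tau=\phi^{\rm L}_\tau\circ\phi^{\rm NL}_\tau$ and $\psi_\tau(x)=(\phi_\tau(x)-x)/\tau$. *)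

theory Defs
  imports "HOL-Analysis.Analysis"
begin

text \<open>Points of R^2 are pairs (u, v) :: real \<times> real; the product type carries the
Euclidean inner product and norm.\<close>

text \<open>The linear map x \<mapsto> B x with B = [[0, -1], [g1, -g2]].\<close>
definition Bmap :: "real \<Rightarrow> real \<Rightarrow> real \<times> real \<Rightarrow> real \<times> real" where
  "Bmap g1 g2 x = (- snd x, g1 * fst x - g2 * snd x)"

definition Ffield :: "real \<Rightarrow> real \<Rightarrow> real \<Rightarrow> real \<times> real \<Rightarrow> real \<times> real" where
  "Ffield g1 g2 b x = (fst x - fst x ^ 3 - snd x, g1 * fst x - g2 * snd x + b)"

definition phiNL :: "real \<Rightarrow> real \<Rightarrow> real \<times> real \<Rightarrow> real \<times> real" where
  "phiNL b t x = (fst x / sqrt (fst x ^ 2 + (1 - fst x ^ 2) * exp (-2 * t)), snd x + b * t)"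

text \<open>Matrix exponential applied to x: e^{tB} x = sum_n (t^n / n!) B^n x.\<close>
definition phiL :: "real \<Rightarrow> real \<Rightarrow> real \<Rightarrow> real \<times> real \<Rightarrow> real \<times> real" where
  "phiL g1 g2 t x = (\<Sum>n. (t ^ n / fact n) *\<^sub>R ((Bmap g1 g2 ^^ n) x))"

definition phi :: "real \<Rightarrow> real \<Rightarrow> real \<Rightarrow> real \<Rightarrow> real \<times> real \<Rightarrow> real \<times> real" where
  "phi g1 g2 b t = phiL g1 g2 t \<circ> phiNL b t"

definition psi :: "real \<Rightarrow> real \<Rightarrow> real \<Rightarrow> real \<Rightarrow> real \<times> real \<Rightarrow> real \<times> real" where
  "psi g1 g2 b t x = (1 / t) *\<^sub>R (phi g1 g2 b t x - x)"

end

theory Submission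
  imports Defs
begin

text \<open>
  With \<open>N = phiNL b tau\<close> we have \<open>tau * psi tau x = e^(tau B) (N x) - x\<close>. Expanding
  \<open>e^(tau B) y = y + tau B y + O(tau^2 |y|)\<close>, the increment \<open>tau (psi x2 - psi x1)\<close> is the defect
  \<open>N x2 - N x1 - (x2 - x1)\<close> of the nonlinear flow, plus \<open>tau B (N x2 - N x1)\<close>, plus
  \<open>O(tau^2 |x2 - x1|)\<close>. The first component of \<open>N\<close> is the flow \<open>h\<close> of \<open>u' = u - u^3\<close>; by the
  mean value theorem its defect is \<open>(u2 - u1) (h'(z) - 1)\<close> with \<open>z^2 \<le> u1^2 + u2^2\<close>, and the
  explicit derivative \<open>h' = e^(-2 tau) / D^(3/2)\<close> satisfies \<open>h' - 1 \<le> tau e^tau\<close>, which gives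
  the one-sided bound without any growth in \<open>x\<close>, and \<open>1 - h'(z) \<le> 4 e^(2 tau) tau z^2\<close>, which
  gives the cubic growth of the Lipschitz constant. The consistency estimate is the
  second-order expansion \<open>h(u) = u + tau (u - u^3) + O(tau^2 (1 + |u|^5))\<close>.
\<close>

lemma abs_fst_le_norm: "\<bar>fst x\<bar> \<le> norm (x :: real \<times> real)"
  using norm_fst_le[of "fst x" "snd x"] by simp

lemma abs_snd_le_norm: "\<bar>snd x\<bar> \<le> norm (x :: real \<times> real)"
  using norm_snd_le[of "snd x" "fst x"] by simp

lemma norm_Pair_le_abs: "norm (a, b) \<le> \<bar>a\<bar> + \<bar>b :: real\<bar>"
  using norm_Pair_le[of a b] by simp

lemma power_le_one_plus_power:
  fixes r :: real
  assumes "0 \<le> r" "k \<le> n"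
  shows "r ^ k \<le> 1 + r ^ n"
proof (cases "r \<le> 1")
  case True
  then have "r ^ k \<le> 1" using assms by (simp add: power_le_one)
  then show ?thesis using assms by (simp add: add_increasing2)
next
  case False
  then have "r ^ k \<le> r ^ n" using assms by (intro power_increasing) auto
  then show ?thesis by simp
qed

lemma square_le_of_between:
  fixes u1 z u2 :: real
  assumes "u1 \<le> z" "z \<le> u2"
  shows "z\<^sup>2 \<le> u1\<^sup>2 + u2\<^sup>2"
proof (cases "0 \<le> z")
  case True
  then have "z\<^sup>2 \<le> u2\<^sup>2" using assms by (intro power_mono) auto
  then show ?thesis by (simp add: add_increasing)
next
  case False
  then have "(- z)\<^sup>2 \<le> (- u1)\<^sup>2" using assms by (intro power_mono) auto
  then show ?thesis by (simp add: add_increasing2)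
qed

lemma exp_minus_le_quadratic:
  fixes y :: real
  assumes "0 \<le> y"
  shows "exp (- y) \<le> 1 - y + y\<^sup>2"
proof -
  have "exp (- y) * (1 + y) \<le> exp (- y) * exp y"
    using exp_ge_add_one_self[of y] by (intro mult_left_mono) auto
  then have "exp (- y) \<le> 1 / (1 + y)" using assms by (simp add: exp_minus field_simps)
  also have "\<dots> \<le> 1 - y + y\<^sup>2"
    using assms by (simp add: field_simps power2_eq_square add_increasing mult_nonneg_nonneg)
  finally show ?thesis .
qed

text \<open>The left-hand side equals \<open>(s - 1)\<^sup>2 (1/2 + 1/s)\<close>.\<close>
lemma inverse_second_order_le:
  fixes s :: real
  assumes "0 < s"
  shows "\<bar>1 / s - 1 + (s\<^sup>2 - 1) / 2\<bar> \<le> (1 / 2 + 1 / s) * (s\<^sup>2 - 1)\<^sup>2"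
proof -
  have "1 / s - 1 + (s\<^sup>2 - 1) / 2 = (1 / 2 + 1 / s) * (s - 1)\<^sup>2"
    using assms by (simp add: field_simps power2_eq_square)
  moreover have "(s - 1)\<^sup>2 \<le> (s\<^sup>2 - 1)\<^sup>2"
  proof -
    have "(s - 1)\<^sup>2 * 1 \<le> (s - 1)\<^sup>2 * (s + 1)\<^sup>2"
      using assms one_le_power[of "s + 1" 2] by (intro mult_left_mono) auto
    then show ?thesis by (simp add: power2_eq_square algebra_simps)
  qed
  ultimately show ?thesis using assms by (simp add: mult_left_mono)
qed

section \<open>Exponential series of a bounded linear map\<close>

lemma linear_funpow: "linear (L :: 'a::real_vector \<Rightarrow> 'a) \<Longrightarrow> linear (L ^^ n)"
  by (induction n) (simp_all add: linear_compose real_vector.linear_id)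

lemma norm_funpow_le:
  fixes L :: "'a::real_normed_vector \<Rightarrow> 'a"
  assumes "\<And>x. norm (L x) \<le> M * norm x" "0 \<le> M"
  shows "norm ((L ^^ n) x) \<le> M ^ n * norm x"
proof (induction n)
  case (Suc n)
  have "norm ((L ^^ Suc n) x) \<le> M * norm ((L ^^ n) x)"
    using assms(1) by simp
  also have "\<dots> \<le> M * (M ^ n * norm x)"
    using Suc assms(2) by (rule mult_left_mono)
  finally show ?case by (simp add: mult.assoc)
qed simp

context
  fixes L :: "'a::banach \<Rightarrow> 'a" and M :: real
  assumes L_bound: "\<And>x. norm (L x) \<le> M * norm x" and M_nonneg: "0 \<le> M"
begin

lemma norm_exp_series_term_le:
  "norm ((t ^ n / fact n) *\<^sub>R (L ^^ n) x) \<le> (\<bar>t\<bar> * M) ^ n / fact n * norm x"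
proof -
  have "norm ((t ^ n / fact n) *\<^sub>R (L ^^ n) x) = \<bar>t\<bar> ^ n / fact n * norm ((L ^^ n) x)"
    by (simp add: power_abs)
  also have "\<dots> \<le> \<bar>t\<bar> ^ n / fact n * (M ^ n * norm x)"
    by (intro mult_left_mono norm_funpow_le L_bound M_nonneg) auto
  finally show ?thesis by (simp add: power_mult_distrib)
qed

lemma summable_exp_series_apply: "summable (\<lambda>n. (t ^ n / fact n) *\<^sub>R (L ^^ n) x)"
proof (rule summable_comparison_test'[OF _ norm_exp_series_term_le])
  show "summable (\<lambda>n. (\<bar>t\<bar> * M) ^ n / fact n * norm x)"
    using sums_summable[OF sums_mult2[OF exp_converges[of "\<bar>t\<bar> * M"], of "norm x"]]
    by (simp add: divide_inverse mult_ac)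
qed

lemma exp_series_apply_diff:
  assumes "linear L"
  shows "(\<Sum>n. (t ^ n / fact n) *\<^sub>R (L ^^ n) (x - y))
       = (\<Sum>n. (t ^ n / fact n) *\<^sub>R (L ^^ n) x) - (\<Sum>n. (t ^ n / fact n) *\<^sub>R (L ^^ n) y)"
  using linear_funpow[OF assms]
  by (simp add: suminf_diff[OF summable_exp_series_apply summable_exp_series_apply]
      linear_diff scaleR_diff_right)

text \<open>Every term dropped from \<open>e\<^sup>t\<^sup>L x\<close> carries \<open>(tM)\<^sup>2\<close>,
  and what is left sums to at most \<open>e\<^sup>t\<^sup>M\<close>.\<close>
lemma exp_series_apply_remainder_le:
  assumes "0 \<le> t"
  shows "norm ((\<Sum>n. (t ^ n / fact n) *\<^sub>R (L ^^ n) x) - x - t *\<^sub>R L x)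
       \<le> (t * M) ^ 2 * exp (t * M) * norm x"
proof -
  let ?a = "\<lambda>n. (t ^ n / fact n) *\<^sub>R (L ^^ n) x"
  let ?c = "t * M"
  have c: "0 \<le> ?c" using assms M_nonneg by simp
  have "(\<Sum>n. ?a n) = (\<Sum>n. ?a (n + 2)) + (\<Sum>i<2. ?a i)"
    by (rule suminf_split_initial_segment[OF summable_exp_series_apply])
  then have split: "(\<Sum>n. ?a n) - x - t *\<^sub>R L x = (\<Sum>n. ?a (n + 2))"
    by (simp add: numeral_2_eq_2)
  have tail_term: "norm (?a (n + 2)) \<le> ?c ^ n / fact n * (?c ^ 2 * norm x)" for n
  proof -
    have "norm (?a (n + 2)) \<le> ?c ^ (n + 2) / fact (n + 2) * norm x"
      using norm_exp_series_term_le[of t "n + 2" x] assms by simp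
    also have "\<dots> \<le> ?c ^ (n + 2) / fact n * norm x"
      using c by (intro mult_right_mono divide_left_mono fact_mono) auto
    also have "\<dots> = ?c ^ n / fact n * (?c ^ 2 * norm x)"
      by (simp only: power_add) (simp add: field_simps)
    finally show ?thesis .
  qed
  have sums: "(\<lambda>n. ?c ^ n / fact n * (?c ^ 2 * norm x)) sums (exp ?c * (?c ^ 2 * norm x))"
    using sums_mult2[OF exp_converges[of ?c], of "?c ^ 2 * norm x"] by (simp add: divide_inverse mult_ac)
  have "norm (\<Sum>n. ?a (n + 2)) \<le> exp ?c * (?c ^ 2 * norm x)"
    using norm_suminf_le[OF tail_term sums_summable[OF sums]] sums_unique[OF sums] by simp
  then show ?thesis unfolding split by (simp add: mult_ac)
qed

end

section \<open>The linear flow\<close>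

lemma linear_Bmap: "linear (Bmap g1 g2)"
  unfolding Bmap_def linear_iff by (auto simp: algebra_simps)

lemma norm_Bmap_le: "norm (Bmap g1 g2 x) \<le> (1 + \<bar>g1\<bar> + \<bar>g2\<bar>) * norm x"
proof -
  have "norm (Bmap g1 g2 x) \<le> \<bar>snd x\<bar> + \<bar>g1 * fst x - g2 * snd x\<bar>"
    unfolding Bmap_def using norm_Pair_le_abs[of "- snd x"] by simp
  also have "\<dots> \<le> \<bar>snd x\<bar> + (\<bar>g1\<bar> * \<bar>fst x\<bar> + \<bar>g2\<bar> * \<bar>snd x\<bar>)"
    by (simp add: abs_mult[symmetric] abs_triangle_ineq4)
  also have "\<dots> \<le> norm x + (\<bar>g1\<bar> * norm x + \<bar>g2\<bar> * norm x)"
    using abs_fst_le_norm abs_snd_le_norm by (intro add_mono mult_left_mono) auto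
  finally show ?thesis by (simp add: algebra_simps)
qed

lemma phiL_diff: "phiL g1 g2 t (x - y) = phiL g1 g2 t x - phiL g1 g2 t y"
  unfolding phiL_def
  by (rule exp_series_apply_diff[OF norm_Bmap_le _ linear_Bmap]) simp

lemma phiL_remainder_le:
  fixes g1 g2 :: real
  assumes "0 \<le> t" "t \<le> tau0"
  defines "M \<equiv> 1 + \<bar>g1\<bar> + \<bar>g2\<bar>"
  shows "norm (phiL g1 g2 t x - x - t *\<^sub>R Bmap g1 g2 x) \<le> M\<^sup>2 * exp (tau0 * M) * t\<^sup>2 * norm x"
proof -
  have "norm (phiL g1 g2 t x - x - t *\<^sub>R Bmap g1 g2 x) \<le> (t * M)\<^sup>2 * exp (t * M) * norm x"
    unfolding phiL_def M_def
    by (rule exp_series_apply_remainder_le[OF norm_Bmap_le _ assms(1)]) simp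
  also have "\<dots> \<le> (t * M)\<^sup>2 * exp (tau0 * M) * norm x"
    using assms by (intro mult_right_mono mult_left_mono) (auto simp: M_def intro: mult_right_mono)
  finally show ?thesis by (simp add: power_mult_distrib mult_ac)
qed

section \<open>The flow of \<open>u' = u - u^3\<close>\<close>

definition cubic_flow_den :: "real \<Rightarrow> real \<Rightarrow> real" where
  "cubic_flow_den t u = exp (-2 * t) + u\<^sup>2 * (1 - exp (-2 * t))"

definition cubic_flow :: "real \<Rightarrow> real \<Rightarrow> real" where
  "cubic_flow t u = u / sqrt (cubic_flow_den t u)"

definition cubic_flow_deriv :: "real \<Rightarrow> real \<Rightarrow> real" where
  "cubic_flow_deriv t u = exp (-2 * t) / (cubic_flow_den t u * sqrt (cubic_flow_den t u))"

lemma phiNL_eq_cubic_flow: "phiNL b t x = (cubic_flow t (fst x), snd x + b * t)"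
  unfolding phiNL_def cubic_flow_def cubic_flow_den_def by (simp add: algebra_simps)

lemma cubic_flow_den_ge: "0 \<le> t \<Longrightarrow> exp (-2 * t) \<le> cubic_flow_den t u"
  unfolding cubic_flow_den_def by simp

lemma cubic_flow_den_pos: "0 \<le> t \<Longrightarrow> 0 < cubic_flow_den t u"
  using cubic_flow_den_ge[of t u] exp_gt_zero[of "-2 * t"] by linarith

lemma sqrt_exp_minus_double: "sqrt (exp (-2 * t)) = exp (- t)"
proof -
  have "exp (-2 * t) = (exp (- t))\<^sup>2" by (simp add: power2_eq_square flip: exp_add)
  then show ?thesis by simp
qed

lemma cubic_flow_has_derivative:
  assumes "0 \<le> t"
  shows "(cubic_flow t has_real_derivative cubic_flow_deriv t u) (at u)"
proof -
  define e where "e = exp (-2 * t)"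
  define D where "D = cubic_flow_den t u"
  have D: "0 < D" unfolding D_def using cubic_flow_den_pos[OF assms] .
  have "((\<lambda>u. u / sqrt (e + u\<^sup>2 * (1 - e))) has_real_derivative
      (sqrt D - u * (2 * u * (1 - e) * inverse (sqrt D) / 2)) / (sqrt D)\<^sup>2) (at u)"
    using D unfolding D_def cubic_flow_den_def e_def
    by (auto intro!: derivative_eq_intros simp: power2_eq_square)
  moreover have "(sqrt D - u * (2 * u * (1 - e) * inverse (sqrt D) / 2)) / (sqrt D)\<^sup>2
      = e / (D * sqrt D)"
  proof -
    have "sqrt D - u * (2 * u * (1 - e) * inverse (sqrt D) / 2) = (D - u\<^sup>2 * (1 - e)) / sqrt D"
      using D by (simp add: field_simps power2_eq_square)
    also have "D - u\<^sup>2 * (1 - e) = e" unfolding D_def cubic_flow_den_def e_def by simp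
    finally show ?thesis using D by (simp add: power2_eq_square)
  qed
  ultimately show ?thesis
    unfolding cubic_flow_def cubic_flow_deriv_def cubic_flow_den_def D_def e_def by simp
qed

lemma cubic_flow_deriv_pos: "0 \<le> t \<Longrightarrow> 0 < cubic_flow_deriv t u"
  unfolding cubic_flow_deriv_def using cubic_flow_den_pos[of t u] by simp

lemma cubic_flow_deriv_le_exp:
  assumes "0 \<le> t"
  shows "cubic_flow_deriv t u \<le> exp t"
proof -
  define e where "e = exp (-2 * t)"
  define D where "D = cubic_flow_den t u"
  have e: "0 < e" unfolding e_def by simp
  have eD: "e \<le> D" unfolding e_def D_def using cubic_flow_den_ge[OF assms] .
  have "exp (- t) \<le> sqrt D"
    using real_sqrt_le_mono[OF eD] unfolding e_def sqrt_exp_minus_double .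
  then have "e / (D * sqrt D) \<le> e / (e * exp (- t))"
    using e eD by (intro divide_left_mono mult_mono) auto
  also have "\<dots> = exp t" using e by (simp add: exp_minus field_simps)
  finally show ?thesis unfolding cubic_flow_deriv_def e_def D_def .
qed

lemma cubic_flow_deriv_minus_one_le:
  assumes "0 \<le> t" "t \<le> tau0"
  shows "cubic_flow_deriv t u - 1 \<le> t * exp tau0"
proof -
  have "exp t * (1 - t) \<le> exp t * exp (- t)"
    using exp_ge_add_one_self[of "- t"] by (intro mult_left_mono) auto
  then have "exp t - 1 \<le> t * exp t" by (simp add: exp_minus algebra_simps)
  also have "\<dots> \<le> t * exp tau0" using assms by (intro mult_left_mono) auto
  finally show ?thesis using cubic_flow_deriv_le_exp[OF assms(1), of u] by linarith
qed

text \<open>The derivative is at least \<open>(e/D)\<^sup>2\<close> because \<open>e = exp (-2 t) \<le> \<surd>D\<close>, and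
  \<open>1 - e/D = u\<^sup>2 (1 - e) / D \<le> 2 t u\<^sup>2 / e\<close>.\<close>
lemma one_minus_cubic_flow_deriv_le:
  assumes "0 \<le> t"
  shows "1 - cubic_flow_deriv t u \<le> 4 * exp (2 * t) * t * u\<^sup>2"
proof -
  define e where "e = exp (-2 * t)"
  define D where "D = cubic_flow_den t u"
  have e: "0 < e" "e \<le> 1" unfolding e_def using assms by auto
  have eD: "e \<le> D" unfolding e_def D_def using cubic_flow_den_ge[OF assms] .
  have D: "0 < D" using e eD by linarith
  have "e \<le> sqrt e" using e by (simp add: real_le_rsqrt power2_eq_square mult_left_le)
  also have "\<dots> \<le> sqrt D" using eD by simp
  finally have "e * sqrt D \<le> sqrt D * sqrt D" using D by (intro mult_right_mono) auto
  then have "e * sqrt D \<le> D" using D by simp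
  then have "(e / D)\<^sup>2 \<le> e / (D * sqrt D)"
    using D e by (simp add: divide_simps power2_eq_square)
  then have lower: "(e / D)\<^sup>2 \<le> cubic_flow_deriv t u"
    unfolding cubic_flow_deriv_def e_def D_def .
  have "1 - (e / D)\<^sup>2 = (1 - e / D) * (1 + e / D)" by (simp add: algebra_simps power2_eq_square)
  also have "\<dots> \<le> (1 - e / D) * 2" using e D eD by (intro mult_left_mono) auto
  also have "1 - e / D = u\<^sup>2 * (1 - e) / D"
  proof -
    have "D - e = u\<^sup>2 * (1 - e)" unfolding D_def e_def cubic_flow_den_def by simp
    moreover have "1 - e / D = (D - e) / D" using D by (simp add: diff_divide_distrib)
    ultimately show ?thesis by simp
  qed
  also have "u\<^sup>2 * (1 - e) / D \<le> u\<^sup>2 * (2 * t) / e"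
  proof (intro frac_le mult_left_mono)
    show "1 - e \<le> 2 * t" using exp_ge_add_one_self[of "-2 * t"] unfolding e_def by simp
  qed (use e eD assms in auto)
  finally have "1 - cubic_flow_deriv t u \<le> 4 * (1 / e) * t * u\<^sup>2"
    using lower by (simp add: mult_ac)
  moreover have "1 / e = exp (2 * t)" unfolding e_def by (simp add: exp_minus inverse_eq_divide)
  ultimately show ?thesis by simp
qed

lemma abs_cubic_flow_deriv_minus_one_le:
  assumes "0 \<le> t" "t \<le> tau0"
  shows "\<bar>cubic_flow_deriv t z - 1\<bar> \<le> t * (exp tau0 + 4 * exp tau0 ^ 2 * z\<^sup>2)"
proof -
  note cubic_flow_deriv_minus_one_le[OF assms, of z]
  moreover have "1 - cubic_flow_deriv t z \<le> t * (4 * exp tau0 ^ 2 * z\<^sup>2)"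
  proof -
    have "exp (2 * t) \<le> exp tau0 ^ 2" using assms by (simp flip: exp_of_nat_mult)
    then have "4 * exp (2 * t) * t * z\<^sup>2 \<le> 4 * exp tau0 ^ 2 * t * z\<^sup>2"
      using assms by (intro mult_right_mono) auto
    then show ?thesis using one_minus_cubic_flow_deriv_le[OF assms(1), of z] by (simp add: mult_ac)
  qed
  moreover have "0 \<le> t * exp tau0" "0 \<le> t * (4 * exp tau0 ^ 2 * z\<^sup>2)"
    using assms by simp_all
  ultimately show ?thesis unfolding abs_le_iff distrib_left by linarith
qed

lemma abs_cubic_flow_deriv_minus_one_le_norms:
  fixes x1 x2 :: "real \<times> real"
  assumes "0 \<le> t" "t \<le> tau0" "z\<^sup>2 \<le> (fst x1)\<^sup>2 + (fst x2)\<^sup>2"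
  defines "X \<equiv> exp tau0"
  shows "\<bar>cubic_flow_deriv t z - 1\<bar> \<le> t * ((X + 8 * X\<^sup>2) * (1 + norm x1 ^ 3 + norm x2 ^ 3))"
proof -
  define A where "A = 1 + norm x1 ^ 3 + norm x2 ^ 3"
  have A: "1 \<le> A" unfolding A_def by simp
  have fst_sq: "(fst x)\<^sup>2 \<le> 1 + norm x ^ 3" for x :: "real \<times> real"
    using power_mono[OF abs_fst_le_norm[of x], of 2] power_le_one_plus_power[of "norm x" 2 3]
    by simp
  have "1 + norm x1 ^ 3 \<le> A" "1 + norm x2 ^ 3 \<le> A" unfolding A_def by simp_all
  then have "z\<^sup>2 \<le> 2 * A" using assms(3) fst_sq[of x1] fst_sq[of x2] by linarith
  then have "4 * X\<^sup>2 * z\<^sup>2 \<le> 4 * X\<^sup>2 * (2 * A)" by (intro mult_left_mono) auto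
  moreover have "X \<le> X * A" using A unfolding X_def by simp
  ultimately have "X + 4 * X\<^sup>2 * z\<^sup>2 \<le> (X + 8 * X\<^sup>2) * A" by (simp add: algebra_simps)
  then have "t * (X + 4 * X\<^sup>2 * z\<^sup>2) \<le> t * ((X + 8 * X\<^sup>2) * A)"
    using assms(1) by (intro mult_left_mono) auto
  then show ?thesis
    using abs_cubic_flow_deriv_minus_one_le[OF assms(1,2), of z] unfolding A_def X_def by linarith
qed

lemma cubic_flow_mvt:
  assumes "0 \<le> t"
  obtains z where "cubic_flow t u2 - cubic_flow t u1 = (u2 - u1) * cubic_flow_deriv t z"
    and "z\<^sup>2 \<le> u1\<^sup>2 + u2\<^sup>2"
proof -
  note deriv = cubic_flow_has_derivative[OF assms]
  consider "u1 < u2" | "u1 = u2" | "u2 < u1" by linarith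
  then show ?thesis
  proof cases
    case 1
    from MVT2[OF 1 deriv] obtain z where "u1 < z" "z < u2"
      "cubic_flow t u2 - cubic_flow t u1 = (u2 - u1) * cubic_flow_deriv t z" by blast
    with square_le_of_between[of u1 z u2] show ?thesis by (intro that) auto
  next
    case 2
    then show ?thesis by (intro that[of u1]) auto
  next
    case 3
    from MVT2[OF 3 deriv] obtain z where "u2 < z" "z < u1"
      "cubic_flow t u1 - cubic_flow t u2 = (u1 - u2) * cubic_flow_deriv t z" by blast
    with square_le_of_between[of u2 z u1] show ?thesis
      by (intro that[of z]) (auto simp: algebra_simps)
  qed
qed

lemma cubic_flow_expansion:
  assumes "0 \<le> t"
  shows "\<bar>cubic_flow t u - u - t * (u - u ^ 3)\<bar> \<le> (12 + 16 * exp t) * t\<^sup>2 * (1 + \<bar>u\<bar> ^ 5)"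
proof -
  define a where "a = 1 - exp (-2 * t)"
  define s where "s = sqrt (cubic_flow_den t u)"
  define r where "r = \<bar>u\<bar>"
  have r: "0 \<le> r" "u\<^sup>2 = r\<^sup>2" unfolding r_def by simp_all
  have a: "0 \<le> a" "a \<le> 2 * t" "2 * t - a \<le> 4 * t\<^sup>2"
    using assms exp_ge_add_one_self[of "-2 * t"] exp_minus_le_quadratic[of "2 * t"]
    by (auto simp: a_def power2_eq_square)
  have s_exp: "exp (- t) \<le> s"
    using real_sqrt_le_mono[OF cubic_flow_den_ge[OF assms]]
    unfolding s_def sqrt_exp_minus_double .
  have s0: "0 < s" using s_exp exp_gt_zero[of "- t"] by linarith
  have "1 / s \<le> 1 / exp (- t)" using s_exp s0 by (intro divide_left_mono) auto
  then have s: "0 < s" "1 / s \<le> exp t" using s0 by (simp_all add: exp_minus divide_inverse)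
  have s_sq: "s\<^sup>2 - 1 = a * (u\<^sup>2 - 1)"
    using cubic_flow_den_pos[OF assms, of u]
    by (simp add: s_def a_def cubic_flow_den_def algebra_simps)
  have u_sq: "\<bar>u\<^sup>2 - 1\<bar> \<le> 1 + r\<^sup>2" unfolding r(2) using r(1) by (simp add: abs_le_iff)
  have "cubic_flow t u - u - t * (u - u ^ 3)
      = u * (1 / s - 1 + (s\<^sup>2 - 1) / 2) + u * (u\<^sup>2 - 1) * ((2 * t - a) / 2)"
    unfolding cubic_flow_def s_def[symmetric] s_sq
    by (simp add: field_simps power2_eq_square power3_eq_cube)
  also have "\<bar>\<dots>\<bar> \<le> r * ((1 / 2 + exp t) * (4 * t\<^sup>2 * (1 + r\<^sup>2)\<^sup>2)) + r * (1 + r\<^sup>2) * (2 * t\<^sup>2)"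
  proof (rule order.trans[OF abs_triangle_ineq add_mono])
    have "\<bar>a * (u\<^sup>2 - 1)\<bar> \<le> 2 * t * (1 + r\<^sup>2)"
      unfolding abs_mult using a u_sq by (intro mult_mono) auto
    then have "\<bar>s\<^sup>2 - 1\<bar>\<^sup>2 \<le> (2 * t * (1 + r\<^sup>2))\<^sup>2"
      unfolding s_sq by (intro power_mono) auto
    then have "(s\<^sup>2 - 1)\<^sup>2 \<le> (2 * t * (1 + r\<^sup>2))\<^sup>2" by simp
    then have "(1 / 2 + 1 / s) * (s\<^sup>2 - 1)\<^sup>2 \<le> (1 / 2 + exp t) * (4 * t\<^sup>2 * (1 + r\<^sup>2)\<^sup>2)"
      using s by (intro mult_mono) (auto simp: power_mult_distrib)
    then show "\<bar>u * (1 / s - 1 + (s\<^sup>2 - 1) / 2)\<bar> \<le> r * ((1 / 2 + exp t) * (4 * t\<^sup>2 * (1 + r\<^sup>2)\<^sup>2))"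
      using inverse_second_order_le[OF s(1)] r(1) unfolding abs_mult r_def[symmetric]
      by (intro mult_left_mono) auto
    show "\<bar>u * (u\<^sup>2 - 1) * ((2 * t - a) / 2)\<bar> \<le> r * (1 + r\<^sup>2) * (2 * t\<^sup>2)"
      using u_sq a r(1) unfolding abs_mult r_def[symmetric]
      by (intro mult_mono) auto
  qed
  also have "\<dots> = t\<^sup>2 * ((2 + 4 * exp t) * (r + 2 * r ^ 3 + r ^ 5) + 2 * (r + r ^ 3))"
    by (simp add: algebra_simps power2_eq_square power3_eq_cube eval_nat_numeral)
  also have "\<dots> \<le> t\<^sup>2 * ((2 + 4 * exp t) * (4 * (1 + r ^ 5)) + 2 * (2 * (1 + r ^ 5)))"
    using power_le_one_plus_power[OF r(1), of 1 5] power_le_one_plus_power[OF r(1), of 3 5]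
    by (intro mult_left_mono add_mono) auto
  finally show ?thesis unfolding r_def by (simp add: algebra_simps)
qed

lemma cubic_flow_expansion_le:
  assumes "0 \<le> t" "t \<le> tau0" "\<bar>u\<bar> \<le> r"
  shows "\<bar>cubic_flow t u - u - t * (u - u ^ 3)\<bar> \<le> (12 + 16 * exp tau0) * t\<^sup>2 * (1 + r ^ 5)"
proof -
  have "(12 + 16 * exp t) * t\<^sup>2 * (1 + \<bar>u\<bar> ^ 5) \<le> (12 + 16 * exp tau0) * t\<^sup>2 * (1 + r ^ 5)"
    using assms by (intro mult_mono power_mono) auto
  then show ?thesis using cubic_flow_expansion[OF assms(1), of u] by linarith
qed

section \<open>The splitting scheme\<close>

lemma phiNL_diff:
  assumes "0 \<le> t"
  obtains z where "phiNL b t x2 - phiNL b t x1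
      = ((fst x2 - fst x1) * cubic_flow_deriv t z, snd x2 - snd x1)"
    and "z\<^sup>2 \<le> (fst x1)\<^sup>2 + (fst x2)\<^sup>2"
proof -
  obtain z where "cubic_flow t (fst x2) - cubic_flow t (fst x1)
      = (fst x2 - fst x1) * cubic_flow_deriv t z" "z\<^sup>2 \<le> (fst x1)\<^sup>2 + (fst x2)\<^sup>2"
    using cubic_flow_mvt[OF assms] .
  then show ?thesis by (intro that[of z]) (simp_all add: phiNL_eq_cubic_flow)
qed

lemma norm_phiNL_minus_le:
  assumes "0 \<le> t" "t \<le> tau0"
  shows "norm (phiNL b t x - x) \<le> t * ((12 + 16 * exp tau0) * tau0 + 2 + \<bar>b\<bar>) * (1 + norm x ^ 5)"
proof -
  define u where "u = fst x"
  define R where "R = 1 + norm x ^ 5"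
  have u: "\<bar>u\<bar> \<le> norm x" unfolding u_def by (rule abs_fst_le_norm)
  have u3: "\<bar>u\<bar> ^ 3 \<le> norm x ^ 3" using u by (intro power_mono) auto
  have R: "1 \<le> R" "\<bar>u\<bar> \<le> R" "\<bar>u\<bar> ^ 3 \<le> R"
    using u u3 power_le_one_plus_power[of "norm x" 1 5] power_le_one_plus_power[of "norm x" 3 5]
    unfolding R_def by (simp_all del: power_mono_iff)
  have "phiNL b t x - x = (cubic_flow t u - u, b * t)"
    by (simp add: phiNL_eq_cubic_flow u_def prod_eq_iff)
  then have "norm (phiNL b t x - x) \<le> \<bar>cubic_flow t u - u\<bar> + \<bar>b * t\<bar>"
    using norm_Pair_le_abs by simp
  also have "\<bar>cubic_flow t u - u\<bar>
      \<le> \<bar>cubic_flow t u - u - t * (u - u ^ 3)\<bar> + t * (\<bar>u\<bar> + \<bar>u\<bar> ^ 3)"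
  proof -
    have "\<bar>t * (u - u ^ 3)\<bar> \<le> t * (\<bar>u\<bar> + \<bar>u\<bar> ^ 3)"
      using assms(1) abs_triangle_ineq4[of u "u ^ 3"]
      by (simp add: abs_mult power_abs mult_left_mono)
    then show ?thesis
      using abs_triangle_ineq[of "cubic_flow t u - u - t * (u - u ^ 3)" "t * (u - u ^ 3)"]
      by simp
  qed
  also have "\<dots> \<le> (12 + 16 * exp tau0) * t\<^sup>2 * R + t * (2 * R)"
    using cubic_flow_expansion_le[OF assms u] R assms(1) unfolding R_def
    by (intro add_mono mult_left_mono) auto
  also have "(12 + 16 * exp tau0) * t\<^sup>2 * R \<le> t * ((12 + 16 * exp tau0) * tau0 * R)"
  proof -
    have "t * t * ((12 + 16 * exp tau0) * R) \<le> t * tau0 * ((12 + 16 * exp tau0) * R)"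
      using assms R by (intro mult_right_mono mult_left_mono) auto
    then show ?thesis by (simp add: power2_eq_square mult_ac)
  qed
  also have "\<bar>b * t\<bar> \<le> t * (\<bar>b\<bar> * R)"
    using mult_left_mono[OF mult_left_mono[OF R(1), of "\<bar>b\<bar>"] assms(1)] assms(1)
    by (simp add: abs_mult mult.commute)
  finally show ?thesis unfolding R_def by (simp add: algebra_simps)
qed

lemma scaled_psi: "t \<noteq> 0 \<Longrightarrow> t *\<^sub>R psi g1 g2 b t x = phiL g1 g2 t (phiNL b t x) - x"
  unfolding psi_def phi_def by simp

lemma Ffield_eq: "Ffield g1 g2 b x = (fst x - fst x ^ 3, b) + Bmap g1 g2 x"
  unfolding Ffield_def Bmap_def by (simp add: algebra_simps)

lemma psi_minus_Ffield_decomposition: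
  assumes "t \<noteq> 0"
  shows "t *\<^sub>R (psi g1 g2 b t x - Ffield g1 g2 b x)
    = (phiL g1 g2 t (phiNL b t x) - phiNL b t x - t *\<^sub>R Bmap g1 g2 (phiNL b t x))
      + (cubic_flow t (fst x) - fst x - t * (fst x - fst x ^ 3), 0)
      + t *\<^sub>R Bmap g1 g2 (phiNL b t x - x)"
  using scaled_psi[OF assms, of g1 g2 b x]
  by (simp add: Ffield_eq phiNL_eq_cubic_flow scaleR_diff_right linear_diff[OF linear_Bmap]
      algebra_simps prod_eq_iff)

lemma psi_diff_decomposition:
  fixes g1 g2 :: real
  assumes "0 < t" "t \<le> tau0"
  defines "M \<equiv> 1 + \<bar>g1\<bar> + \<bar>g2\<bar>" and "X \<equiv> exp tau0"
  obtains z v \<rho> where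
    "t *\<^sub>R (psi g1 g2 b t x2 - psi g1 g2 b t x1)
      = ((fst x2 - fst x1) * (cubic_flow_deriv t z - 1), 0) + t *\<^sub>R v + \<rho>"
    and "z\<^sup>2 \<le> (fst x1)\<^sup>2 + (fst x2)\<^sup>2"
    and "norm v \<le> M * (X + 1) * norm (x2 - x1)"
    and "norm \<rho> \<le> t * (M\<^sup>2 * exp (tau0 * M) * tau0 * (X + 1)) * norm (x2 - x1)"
proof -
  have t: "0 \<le> t" using assms(1) by simp
  define dN where "dN = phiNL b t x2 - phiNL b t x1"
  obtain z where dN: "dN = ((fst x2 - fst x1) * cubic_flow_deriv t z, snd x2 - snd x1)"
    and z: "z\<^sup>2 \<le> (fst x1)\<^sup>2 + (fst x2)\<^sup>2"
    using phiNL_diff[OF t] unfolding dN_def by blast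
  define d where "d = cubic_flow_deriv t z"
  have d: "0 < d" "d \<le> X"
    using cubic_flow_deriv_pos[OF t] cubic_flow_deriv_le_exp[OF t, of z] assms(2)
    unfolding d_def X_def by (auto intro: order_trans)
  have "norm dN \<le> \<bar>fst x2 - fst x1\<bar> * d + \<bar>snd x2 - snd x1\<bar>"
    using norm_Pair_le_abs[of "(fst x2 - fst x1) * d" "snd x2 - snd x1"] d
    unfolding dN d_def[symmetric] by (simp add: abs_mult)
  also have "\<dots> \<le> norm (x2 - x1) * X + norm (x2 - x1)"
    using abs_fst_le_norm[of "x2 - x1"] abs_snd_le_norm[of "x2 - x1"] d
    by (intro add_mono mult_mono) auto
  finally have norm_dN: "norm dN \<le> (X + 1) * norm (x2 - x1)"
    by (simp add: algebra_simps)
  have norm_v: "norm (Bmap g1 g2 dN) \<le> M * (X + 1) * norm (x2 - x1)"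
    using norm_Bmap_le[of g1 g2 dN] mult_left_mono[OF norm_dN, of M]
    unfolding M_def by (simp add: mult.assoc)
  define \<rho> where "\<rho> = phiL g1 g2 t dN - dN - t *\<^sub>R Bmap g1 g2 dN"
  have "norm \<rho> \<le> M\<^sup>2 * exp (tau0 * M) * t\<^sup>2 * norm dN"
    using phiL_remainder_le[OF t assms(2)] unfolding \<rho>_def M_def .
  also have "\<dots> \<le> M\<^sup>2 * exp (tau0 * M) * (t * tau0) * ((X + 1) * norm (x2 - x1))"
    using norm_dN t assms(2) by (intro mult_mono) (auto simp: power2_eq_square mult_left_mono)
  finally have norm_\<rho>: "norm \<rho> \<le> t * (M\<^sup>2 * exp (tau0 * M) * tau0 * (X + 1)) * norm (x2 - x1)"
    by (simp add: mult_ac)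
  have "t *\<^sub>R (psi g1 g2 b t x2 - psi g1 g2 b t x1) = phiL g1 g2 t dN - (x2 - x1)"
    using scaled_psi[of t g1 g2 b] assms(1)
    by (simp add: dN_def phiL_diff scaleR_diff_right)
  also have "\<dots> = (dN - (x2 - x1)) + t *\<^sub>R Bmap g1 g2 dN + \<rho>" unfolding \<rho>_def by simp
  also have "dN - (x2 - x1) = ((fst x2 - fst x1) * (d - 1), 0)"
    unfolding dN d_def by (simp add: prod_eq_iff algebra_simps)
  finally show ?thesis using that z norm_v norm_\<rho> unfolding d_def by blast
qed

lemma psi_one_sided_lipschitz:
  "\<exists>C. \<forall>t\<in>{0<..<tau0}. \<forall>x1 x2.
     inner (x2 - x1) (psi g1 g2 b t x2 - psi g1 g2 b t x1) \<le> C * norm (x2 - x1) ^ 2"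
proof -
  define M where "M = 1 + \<bar>g1\<bar> + \<bar>g2\<bar>"
  define X where "X = exp tau0"
  define C where "C = X + M * (X + 1) + M\<^sup>2 * exp (tau0 * M) * tau0 * (X + 1)"
  have "inner (x2 - x1) (psi g1 g2 b t x2 - psi g1 g2 b t x1) \<le> C * norm (x2 - x1) ^ 2"
    if "t \<in> {0<..<tau0}" for t x1 x2
  proof -
    have t: "0 < t" "t < tau0" using that by auto
    let ?dx = "x2 - x1"
    obtain z v \<rho> where split: "t *\<^sub>R (psi g1 g2 b t x2 - psi g1 g2 b t x1)
        = ((fst x2 - fst x1) * (cubic_flow_deriv t z - 1), 0) + t *\<^sub>R v + \<rho>"
      and v: "norm v \<le> M * (X + 1) * norm ?dx"
      and \<rho>: "norm \<rho> \<le> t * (M\<^sup>2 * exp (tau0 * M) * tau0 * (X + 1)) * norm ?dx"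
      using psi_diff_decomposition[OF t(1) less_imp_le[OF t(2)]] unfolding M_def X_def by blast
    have "cubic_flow_deriv t z - 1 \<le> t * X"
      using cubic_flow_deriv_minus_one_le[of t tau0 z] t unfolding X_def by simp
    then have "(fst x2 - fst x1)\<^sup>2 * (cubic_flow_deriv t z - 1) \<le> (fst x2 - fst x1)\<^sup>2 * (t * X)"
      by (rule mult_left_mono) simp
    then have "inner ?dx ((fst x2 - fst x1) * (cubic_flow_deriv t z - 1), 0)
        \<le> (fst x2 - fst x1)\<^sup>2 * (t * X)"
      by (simp add: inner_prod_def power2_eq_square mult.assoc)
    also have "\<dots> \<le> norm ?dx ^ 2 * (t * X)"
      using abs_fst_le_norm[of ?dx] t unfolding X_def
      by (intro mult_right_mono) (auto simp: abs_le_square_iff[symmetric])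
    finally have i1: "inner ?dx ((fst x2 - fst x1) * (cubic_flow_deriv t z - 1), 0)
        \<le> t * X * norm ?dx ^ 2" by (simp add: mult_ac)
    have i2: "inner ?dx (t *\<^sub>R v) \<le> t * (M * (X + 1)) * norm ?dx ^ 2"
      using norm_cauchy_schwarz[of ?dx v] mult_left_mono[OF v, of "norm ?dx"] t
      by (simp add: power2_eq_square mult_ac mult_left_mono)
    have i3: "inner ?dx \<rho> \<le> t * (M\<^sup>2 * exp (tau0 * M) * tau0 * (X + 1)) * norm ?dx ^ 2"
      using norm_cauchy_schwarz[of ?dx \<rho>] mult_left_mono[OF \<rho>, of "norm ?dx"]
      by (simp add: power2_eq_square mult_ac)
    have "t * inner ?dx (psi g1 g2 b t x2 - psi g1 g2 b t x1)
        = inner ?dx (t *\<^sub>R (psi g1 g2 b t x2 - psi g1 g2 b t x1))" by simp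
    also have "\<dots> = inner ?dx ((fst x2 - fst x1) * (cubic_flow_deriv t z - 1), 0)
          + inner ?dx (t *\<^sub>R v) + inner ?dx \<rho>"
      unfolding split by (simp only: inner_add_right)
    also have "\<dots> \<le> t * (C * norm ?dx ^ 2)"
      using add_mono[OF add_mono[OF i1 i2] i3] by (simp add: C_def algebra_simps)
    finally show ?thesis using t by simp
  qed
  then show ?thesis by (intro exI[of _ C] ballI allI)
qed

lemma psi_lipschitz:
  "\<exists>C. \<forall>t\<in>{0<..<tau0}. \<forall>x1 x2.
     norm (psi g1 g2 b t x2 - psi g1 g2 b t x1)
       \<le> C * (1 + norm x1 ^ 3 + norm x2 ^ 3) * norm (x2 - x1)"
proof -
  define M where "M = 1 + \<bar>g1\<bar> + \<bar>g2\<bar>"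
  define X where "X = exp tau0"
  define Q where "Q = M * (X + 1) + M\<^sup>2 * exp (tau0 * M) * tau0 * (X + 1)"
  define C where "C = X + 8 * X\<^sup>2 + Q"
  have "norm (psi g1 g2 b t x2 - psi g1 g2 b t x1)
      \<le> C * (1 + norm x1 ^ 3 + norm x2 ^ 3) * norm (x2 - x1)"
    if "t \<in> {0<..<tau0}" for t x1 x2
  proof -
    have t: "0 < t" "t < tau0" using that by auto
    let ?dx = "x2 - x1"
    define A where "A = 1 + norm x1 ^ 3 + norm x2 ^ 3"
    have A: "1 \<le> A" unfolding A_def by simp
    obtain z v \<rho> where split: "t *\<^sub>R (psi g1 g2 b t x2 - psi g1 g2 b t x1)
        = ((fst x2 - fst x1) * (cubic_flow_deriv t z - 1), 0) + t *\<^sub>R v + \<rho>"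
      and z: "z\<^sup>2 \<le> (fst x1)\<^sup>2 + (fst x2)\<^sup>2"
      and v: "norm v \<le> M * (X + 1) * norm ?dx"
      and \<rho>: "norm \<rho> \<le> t * (M\<^sup>2 * exp (tau0 * M) * tau0 * (X + 1)) * norm ?dx"
      using psi_diff_decomposition[OF t(1) less_imp_le[OF t(2)]] unfolding M_def X_def by blast
    have "\<bar>cubic_flow_deriv t z - 1\<bar> \<le> t * ((X + 8 * X\<^sup>2) * A)"
      using abs_cubic_flow_deriv_minus_one_le_norms[OF _ _ z] t unfolding A_def X_def by simp
    then have pair: "norm ((fst x2 - fst x1) * (cubic_flow_deriv t z - 1), 0::real)
        \<le> norm ?dx * (t * ((X + 8 * X\<^sup>2) * A))"
      using abs_fst_le_norm[of ?dx] by (simp add: abs_mult mult_mono)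
    have "t * norm (psi g1 g2 b t x2 - psi g1 g2 b t x1)
        = norm (((fst x2 - fst x1) * (cubic_flow_deriv t z - 1), 0) + t *\<^sub>R v + \<rho>)"
      using t by (simp flip: split)
    also have "\<dots> \<le> norm ((fst x2 - fst x1) * (cubic_flow_deriv t z - 1), 0::real)
        + norm (t *\<^sub>R v) + norm \<rho>"
      by (intro norm_triangle_le add_mono norm_triangle_ineq order.refl)
    also have "\<dots> \<le> norm ?dx * (t * ((X + 8 * X\<^sup>2) * A)) + t * norm v + norm \<rho>"
      using pair t by simp
    also have "\<dots> \<le> t * (C * A * norm ?dx)"
    proof -
      have "t * norm v + norm \<rho> \<le> t * (Q * norm ?dx)"
        using mult_left_mono[OF v, of t] \<rho> t by (simp add: Q_def algebra_simps)
      moreover have "0 \<le> Q"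
        using t unfolding Q_def M_def X_def by (intro add_nonneg_nonneg mult_nonneg_nonneg) auto
      then have "t * (Q * norm ?dx) \<le> t * (Q * A * norm ?dx)"
        using A t by (intro mult_left_mono mult_right_mono) (auto simp: mult_le_cancel_left1)
      ultimately show ?thesis by (simp add: C_def algebra_simps)
    qed
    finally show ?thesis using t unfolding A_def by simp
  qed
  then show ?thesis by (intro exI[of _ C] ballI allI)
qed

lemma psi_consistency:
  "\<exists>C. \<forall>t\<in>{0<..<tau0}. \<forall>x.
     norm (psi g1 g2 b t x - Ffield g1 g2 b x) \<le> C * t * (1 + norm x ^ 5)"
proof -
  define M where "M = 1 + \<bar>g1\<bar> + \<bar>g2\<bar>"
  define K where "K = M\<^sup>2 * exp (tau0 * M)"
  define c where "c = 12 + 16 * exp tau0"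
  define L where "L = c * tau0 + 2 + \<bar>b\<bar>"
  define C where "C = K * (1 + tau0 * L) + c + M * L"
  have "norm (psi g1 g2 b t x - Ffield g1 g2 b x) \<le> C * t * (1 + norm x ^ 5)"
    if "t \<in> {0<..<tau0}" for t x
  proof -
    have t: "0 < t" "t \<le> tau0" using that by auto
    define R where "R = 1 + norm x ^ 5"
    define N where "N = phiNL b t x"
    define P where "P = cubic_flow t (fst x) - fst x - t * (fst x - fst x ^ 3)"
    define \<rho> where "\<rho> = phiL g1 g2 t N - N - t *\<^sub>R Bmap g1 g2 N"
    have R: "norm x \<le> R" "0 \<le> L * R"
      using power_le_one_plus_power[of "norm x" 1 5] t unfolding R_def L_def c_def by auto
    have N_x: "norm (N - x) \<le> t * L * R"
      using norm_phiNL_minus_le[OF less_imp_le[OF t(1)] t(2)] unfolding N_def L_def c_def R_def .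
    have "norm N \<le> norm x + norm (N - x)" by (rule norm_triangle_sub)
    also have "\<dots> \<le> (1 + tau0 * L) * R"
      using N_x R t mult_right_mono[OF t(2) R(2)] by (simp add: algebra_simps)
    finally have N: "norm N \<le> (1 + tau0 * L) * R" .
    have split: "t *\<^sub>R (psi g1 g2 b t x - Ffield g1 g2 b x) = \<rho> + (P, 0) + t *\<^sub>R Bmap g1 g2 (N - x)"
      unfolding \<rho>_def P_def N_def using t by (intro psi_minus_Ffield_decomposition) simp
    have \<rho>: "norm \<rho> \<le> K * t\<^sup>2 * norm N"
      using phiL_remainder_le[OF less_imp_le[OF t(1)] t(2)] unfolding \<rho>_def K_def M_def .
    have P: "\<bar>P\<bar> \<le> c * t\<^sup>2 * R"
      using cubic_flow_expansion_le[OF less_imp_le[OF t(1)] t(2) abs_fst_le_norm]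
      unfolding P_def c_def R_def .
    have B: "norm (Bmap g1 g2 (N - x)) \<le> M * (t * L * R)"
      using norm_Bmap_le[of g1 g2 "N - x"] mult_left_mono[OF N_x, of M]
      unfolding M_def by simp
    have "t * norm (psi g1 g2 b t x - Ffield g1 g2 b x)
        = norm (\<rho> + (P, 0) + t *\<^sub>R Bmap g1 g2 (N - x))"
      using t by (simp flip: split)
    also have "\<dots> \<le> norm \<rho> + norm (P, 0::real) + norm (t *\<^sub>R Bmap g1 g2 (N - x))"
      by (intro norm_triangle_le add_mono norm_triangle_ineq order.refl)
    also have "\<dots> \<le> K * t\<^sup>2 * ((1 + tau0 * L) * R) + c * t\<^sup>2 * R + t * (M * (t * L * R))"
      using \<rho> mult_left_mono[OF N, of "K * t\<^sup>2"] P B t unfolding K_def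
      by (intro add_mono) (auto intro: mult_left_mono)
    also have "\<dots> = t * (C * t * R)" by (simp add: C_def algebra_simps power2_eq_square)
    finally show ?thesis using t unfolding R_def by simp
  qed
  then show ?thesis by (intro exI[of _ C] ballI allI)
qed

theorem mainTheorem4:
  fixes g1 g2 b tau0 :: real
  assumes "tau0 > 0"
  shows "(\<exists>C>0. \<forall>tau\<in>{0<..<tau0}. \<forall>x1 x2 x :: real \<times> real.
            inner (x2 - x1) (psi g1 g2 b tau x2 - psi g1 g2 b tau x1) \<le> C * norm (x2 - x1) ^ 2
          \<and> norm (psi g1 g2 b tau x2 - psi g1 g2 b tau x1)
              \<le> C * (1 + norm x1 ^ 3 + norm x2 ^ 3) * norm (x2 - x1)
          \<and> norm (psi g1 g2 b tau x - Ffield g1 g2 b x) \<le> C * tau * (1 + norm x ^ 5))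
       \<and> bdd_above ((\<lambda>tau. norm (psi g1 g2 b tau 0)) ` {0<..<tau0})"
proof -
  obtain C1 C2 C3 where
    C1: "\<forall>t\<in>{0<..<tau0}. \<forall>x1 x2.
      inner (x2 - x1) (psi g1 g2 b t x2 - psi g1 g2 b t x1) \<le> C1 * norm (x2 - x1) ^ 2" and
    C2: "\<forall>t\<in>{0<..<tau0}. \<forall>x1 x2. norm (psi g1 g2 b t x2 - psi g1 g2 b t x1)
      \<le> C2 * (1 + norm x1 ^ 3 + norm x2 ^ 3) * norm (x2 - x1)" and
    C3: "\<forall>t\<in>{0<..<tau0}. \<forall>x.
      norm (psi g1 g2 b t x - Ffield g1 g2 b x) \<le> C3 * t * (1 + norm x ^ 5)"
    using psi_one_sided_lipschitz psi_lipschitz psi_consistency by metis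
  define C where "C = 1 + \<bar>C1\<bar> + \<bar>C2\<bar> + \<bar>C3\<bar>"
  have C: "0 < C" "C1 \<le> C" "C2 \<le> C" "C3 \<le> C" unfolding C_def by auto
  have "bdd_above ((\<lambda>tau. norm (psi g1 g2 b tau 0)) ` {0<..<tau0})"
  proof (rule bdd_aboveI2)
    fix t assume t: "t \<in> {0<..<tau0}"
    have "norm (psi g1 g2 b t 0 - Ffield g1 g2 b 0) \<le> C3 * t"
      using bspec[OF C3 t, THEN spec[of _ 0]] by simp
    also have "\<dots> \<le> \<bar>C3\<bar> * tau0" using t by (intro mult_mono) auto
    finally show "norm (psi g1 g2 b t 0) \<le> norm (Ffield g1 g2 b 0) + \<bar>C3\<bar> * tau0"
      using norm_triangle_ineq2[of "psi g1 g2 b t 0" "Ffield g1 g2 b 0"] by linarith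
  qed
  with C1 C2 C3 C show ?thesis
    by (fastforce intro!: exI[of _ C] intro: order_trans mult_right_mono)
qed

end
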